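(* Let $0<p<1$, let $m$ be a median of $\vartheta(G(n,p))$ (i.e. $\Pr(\vartheta(G(n,p))\leq m)\geq1/2$ and $\Pr(\vartheta(G(n,p))\geq m)\geq1/2$), let $\vartheta_0>0$ be any number, and let $\xi\geq10$. Then $$\Pr\big(m+\xi\leq\vartheta(G(n,p))\leq\vartheta_0\big)\leq 2\exp(-\xi^2/(5\vartheta_0)).$$
   Context: $G(n,p)$ is the random graph on $\{1,\dots,n\}$ with each possible edge present independently with probability $p$. $\vartheta(G)$ is the Lovász number of $G$; equivalently, $\vartheta(G)$ is the maximum of $\sum_{i=1}^n c(v_i)$ over all tuples $(v_1,\dots,v_n)$ of vectors in some $\mathbb R^d$ with $v_i\perp v_j$ whenever $\{i,j\}$ is an edge of $G$, where $c(a)=a_1^2/\|a\|^2$ for $a\neq0$ and $c(0)=0$. *)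

theory Defs
  imports "HOL-Analysis.Analysis" "HOL-Probability.Probability"
begin

text \<open>Graphs on vertex set {1..n} are represented by their edge indicator
  E :: nat set \<Rightarrow> bool on unordered pairs {i,j}.\<close>

definition pairs :: "nat \<Rightarrow> nat set set" where
  "pairs n = {{i, j} | i j. 1 \<le> i \<and> i < j \<and> j \<le> n}"

definition gnp :: "nat \<Rightarrow> real \<Rightarrow> (nat set \<Rightarrow> bool) pmf" where
  "gnp n p = Pi_pmf (pairs n) False (\<lambda>_. bernoulli_pmf p)"

text \<open>Vectors in R^d are represented as functions nat \<Rightarrow> real, using coordinates 0..<d;
  coordinate 0 is the "first" coordinate.\<close>
definition inner_d :: "nat \<Rightarrow> (nat \<Rightarrow> real) \<Rightarrow> (nat \<Rightarrow> real) \<Rightarrow> real" where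
  "inner_d d a b = (\<Sum>k<d. a k * b k)"

definition cval :: "nat \<Rightarrow> (nat \<Rightarrow> real) \<Rightarrow> real" where
  "cval d a = (if inner_d d a a = 0 then 0 else (a 0)^2 / inner_d d a a)"

definition lovasz_theta :: "nat \<Rightarrow> (nat set \<Rightarrow> bool) \<Rightarrow> real" where
  "lovasz_theta n E = Sup {(\<Sum>i=1..n. cval d (v i)) | d v.
      d \<ge> 1 \<and> (\<forall>i j. 1 \<le> i \<and> i \<le> n \<and> 1 \<le> j \<and> j \<le> n \<and> i \<noteq> j \<and> E {i, j}
                 \<longrightarrow> inner_d d (v i) (v j) = 0)}"

end

theory Submission
  imports Defs
begin

(* Expose G(n,p) vertex by vertex: vertex k reveals its edges to the vertices j < k, so
   G(n,p) is the image of a product of n independent coordinates, and Talagrand's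
   inequality P(A) * E exp (d(x,A)^2 / 4) <= 1 for the convex distance d applies. Let A be
   the set of exposures whose graph has theta <= m, so P(A) >= 1/2, and let x be the
   exposure of a graph G with m + xi <= theta(G) <= theta0. Take an almost optimal
   orthogonal representation v of G and weights c i = cval (v i) in [0,1]. For y in A,
   replacing v by 0 at the vertices where y differs from x gives an orthogonal
   representation of the graph of y, so these vertices carry c-weight at least about xi.
   By Cauchy-Schwarz this forces d(x,A)^2 >= (9/10 xi)^2 / sum (c i)^2, and
   sum (c i)^2 <= sum (c i) <= theta(G) <= theta0. *)

lemma exp_quarter_le: "exp (1/4 :: real) \<le> 4/3"
proof -
  have "3/4 \<le> exp (-1/4 :: real)"
    using exp_ge_add_one_self[of "-1/4 :: real"] by simp
  then show ?thesis
    by (simp add: exp_minus field_simps)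
qed

lemma exp_neg_half_le: "exp (-1/2 :: real) \<le> 2/3"
proof -
  have "3/2 \<le> exp (1/2 :: real)"
    using exp_ge_add_one_self[of "1/2 :: real"] by simp
  then show ?thesis
    by (simp add: exp_minus field_simps)
qed

lemma exp_neg_add_exp_le_two:
  fixes t :: real
  assumes "t \<le> 0"
  shows "exp (-t - t^2) + exp t \<le> 2"
proof -
  let ?h = "\<lambda>t::real. exp (-t - t^2) + exp t"
  have "?h t \<le> ?h 0"
  proof (rule DERIV_nonneg_imp_nondecreasing[of t 0 ?h])
    fix x :: real
    have "1 + 2*x \<le> exp (2*x + x^2)"
      using exp_ge_add_one_self[of "2*x + x^2"] zero_le_power2[of x] by linarith
    then have "(1 + 2*x) * exp (-x - x^2) \<le> exp (2*x + x^2) * exp (-x - x^2)"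
      by (intro mult_right_mono) auto
    also have "\<dots> = exp x"
      by (simp add: exp_add[symmetric])
    finally have "0 \<le> exp (-x - x^2) * (-1 - 2*x) + exp x"
      by (simp add: algebra_simps)
    moreover have "(?h has_real_derivative (exp (-x - x^2) * (-1 - 2*x) + exp x)) (at x)"
      by (auto intro!: derivative_eq_intros simp: power2_eq_square)
    ultimately show "\<exists>y. (?h has_real_derivative y) (at x) \<and> 0 \<le> y"
      by blast
  qed (use assms in auto)
  then show ?thesis
    by simp
qed

(* The weight used in Talagrand's induction step: l = 0 for r <= exp (-1/2),
   and l = 1 + 2 ln r otherwise. *)

lemma exists_talagrand_weight:
  fixes r :: real
  assumes "0 < r" "r \<le> 1"
  shows "\<exists>l. 0 \<le> l \<and> l \<le> 1 \<and> exp ((1 - l)^2 / 4) * r powr (-l) \<le> 2 - r"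
proof (cases "r \<le> exp (-1/2)")
  case True
  then show ?thesis
    using assms exp_quarter_le exp_neg_half_le by (intro exI[of _ 0]) auto
next
  case False
  define t where "t = ln r"
  have r: "r = exp t" and "t \<le> 0"
    using assms by (auto simp: t_def)
  have "-1/2 < t"
    using False unfolding r by simp
  have "exp ((1 - (1 + 2*t))^2 / 4) * r powr (-(1 + 2*t)) = exp (-t - t^2)"
    unfolding r by (simp add: powr_def exp_add[symmetric] power2_eq_square algebra_simps)
  also have "\<dots> \<le> 2 - r"
    using exp_neg_add_exp_le_two[OF \<open>t \<le> 0\<close>] r by simp
  finally show ?thesis
    using \<open>-1/2 < t\<close> \<open>t \<le> 0\<close> by (intro exI[of _ "1 + 2*t"]) auto
qed

lemma square_convex_comb_le:
  fixes a b l :: real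
  assumes "0 \<le> l" "l \<le> 1"
  shows "(l * a + (1 - l) * b)^2 \<le> l * a^2 + (1 - l) * b^2"
proof -
  have "l * a^2 + (1 - l) * b^2 - (l * a + (1 - l) * b)^2 = l * (1 - l) * (a - b)^2"
    by (simp add: power2_eq_square algebra_simps)
  then show ?thesis
    using assms by (smt (verit) mult_nonneg_nonneg zero_le_power2)
qed

lemma two_minus_div_div_le_inverse:
  fixes a b :: real
  assumes "0 < a" "0 < b"
  shows "(2 - a / b) / b \<le> 1 / a"
proof -
  have "a * (2 * b - a) \<le> b^2"
    using zero_le_power2[of "b - a"] by (simp add: power2_eq_square algebra_simps)
  then show ?thesis
    using assms by (simp add: field_simps power2_eq_square)
qed

lemma integrable_measure_pmf_bounded:
  fixes f :: "'a \<Rightarrow> real"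
  assumes "\<And>x. \<bar>f x\<bar> \<le> C"
  shows "integrable (measure_pmf M) f"
  by (rule measure_pmf.integrable_const_bound[of _ C]) (use assms in auto)

lemma integral_bind_pmf_bounded:
  fixes f :: "'b \<Rightarrow> real"
  assumes "\<And>y. \<bar>f y\<bar> \<le> C"
  shows "(\<integral>y. f y \<partial>bind_pmf M N) = (\<integral>x. (\<integral>y. f y \<partial>N x) \<partial>M)"
  unfolding measure_pmf_bind
  by (rule integral_bind[where K = "count_space UNIV" and B = C and B' = 1])
     (use assms in \<open>auto simp: measure_pmf.emeasure_space_1 measure_pmf_in_subprob_algebra\<close>)

lemma integral_Pi_pmf_insert:
  fixes f :: "('i \<Rightarrow> 'a) \<Rightarrow> real"
  assumes "finite I" "i \<notin> I" "\<And>x. \<bar>f x\<bar> \<le> C"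
  shows "(\<integral>x. f x \<partial>Pi_pmf (insert i I) d M)
           = (\<integral>w. (\<integral>x. f (x(i := w)) \<partial>Pi_pmf I d M) \<partial>M i)"
  using assms
  by (simp add: Pi_pmf_insert' integral_bind_pmf_bounded[where C = C])

lemma prob_Pi_pmf_insert:
  assumes "finite I" "i \<notin> I"
  shows "measure_pmf.prob (Pi_pmf (insert i I) d M) A
           = (\<integral>w. measure_pmf.prob (Pi_pmf I d M) {x. x(i := w) \<in> A} \<partial>M i)"
proof -
  have "measure_pmf.prob (Pi_pmf (insert i I) d M) A = (\<integral>x. indicator A x \<partial>Pi_pmf (insert i I) d M)"
    by simp
  also have "\<dots> = (\<integral>w. (\<integral>x. indicator A (x(i := w)) \<partial>Pi_pmf I d M) \<partial>M i)"
    by (rule integral_Pi_pmf_insert[OF assms, where C = 1]) (simp add: indicator_def)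
  also have "(\<lambda>w. (\<integral>x. indicator A (x(i := w)) \<partial>Pi_pmf I d M))
      = (\<lambda>w. measure_pmf.prob (Pi_pmf I d M) {x. x(i := w) \<in> A})"
  proof
    fix w
    have fibre: "(\<lambda>x. indicator A (x(i := w))) = indicator {x. x(i := w) \<in> A}"
      by (auto simp: indicator_def)
    show "(\<integral>x. indicator A (x(i := w)) \<partial>Pi_pmf I d M) = measure_pmf.prob (Pi_pmf I d M) {x. x(i := w) \<in> A}"
      by (subst fibre) simp
  qed
  finally show ?thesis .
qed

lemma measure_pmf_prob_bind:
  "measure_pmf.prob (bind_pmf M N) S = (\<integral>x. measure_pmf.prob (N x) S \<partial>M)"
proof -
  have "measure_pmf.prob (bind_pmf M N) S = (\<integral>y. indicator S y \<partial>bind_pmf M N)"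
    by simp
  also have "\<dots> = (\<integral>x. (\<integral>y. indicator S y \<partial>N x) \<partial>M)"
    by (rule integral_bind_pmf_bounded[where C = 1]) simp
  finally show ?thesis by simp
qed

lemma integrable_exp_measure_pmf:
  fixes f :: "'a \<Rightarrow> real"
  assumes "\<And>x. f x \<le> C"
  shows "integrable (measure_pmf M) (\<lambda>x. exp (f x))"
  by (rule integrable_measure_pmf_bounded[where C = "exp C"]) (use assms in simp)

(* Hoelder's inequality for exp u and exp v with exponents 1/l and 1/(1 - l). *)

lemma integral_exp_convex_comb_le:
  fixes u v :: "'a \<Rightarrow> real" and M :: "'a pmf"
  assumes l: "0 \<le> l" "l \<le> 1" and bounded: "\<And>x. u x \<le> C" "\<And>x. v x \<le> C"
  shows "(\<integral>x. exp (l * u x + (1 - l) * v x) \<partial>M)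
           \<le> (\<integral>x. exp (u x) \<partial>M) powr l * (\<integral>x. exp (v x) \<partial>M) powr (1 - l)"
proof -
  have int_u: "integrable M (\<lambda>x. exp (u x))" and int_v: "integrable M (\<lambda>x. exp (v x))"
    using bounded by (auto intro: integrable_exp_measure_pmf)
  have int_comb: "integrable M (\<lambda>x. exp (l * u x + (1 - l) * v x))"
    using bounded l by (intro integrable_exp_measure_pmf convex_bound_le) auto
  define a where "a = (\<integral>x. exp (u x) \<partial>M)"
  define b where "b = (\<integral>x. exp (v x) \<partial>M)"
  have "0 < a" "0 < b"
    unfolding a_def b_def using int_u int_v
    by (auto intro!: measure_pmf.integral_less_AE_space[of M "\<lambda>_. 0", simplified]
             simp: measure_pmf.emeasure_space_1)
  then have young: "exp (l * u x + (1 - l) * v x)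
      \<le> a powr l * b powr (1 - l) * (l * (exp (u x) / a) + (1 - l) * (exp (v x) / b))" for x
  proof -
    have "exp (l * u x + (1 - l) * v x) = a powr l * b powr (1 - l) * ((exp (u x) / a) powr l * (exp (v x) / b) powr (1 - l))"
      using \<open>0 < a\<close> \<open>0 < b\<close> by (simp add: powr_def ln_div exp_add[symmetric] algebra_simps)
    also have "\<dots> \<le> a powr l * b powr (1 - l) * (l * (exp (u x) / a) + (1 - l) * (exp (v x) / b))"
      using \<open>0 < a\<close> \<open>0 < b\<close> l by (intro mult_left_mono Youngs_inequality_0) auto
    finally show ?thesis .
  qed
  have "(\<integral>x. exp (l * u x + (1 - l) * v x) \<partial>M)
      \<le> (\<integral>x. a powr l * b powr (1 - l) * (l * (exp (u x) / a) + (1 - l) * (exp (v x) / b)) \<partial>M)"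
    by (intro integral_mono young int_comb integrable_mult_right Bochner_Integration.integrable_add
        integrable_divide int_u int_v)
  also have "\<dots> = a powr l * b powr (1 - l) * (l * (a / a) + (1 - l) * (b / b))"
    using int_u int_v by (simp add: a_def b_def)
  also have "\<dots> = a powr l * b powr (1 - l)"
    using \<open>0 < a\<close> \<open>0 < b\<close> by simp
  finally show ?thesis unfolding a_def b_def .
qed

section \<open>Talagrand's convex distance\<close>

(* convex_dist2 I A x is the square of Talagrand's convex distance from x to A over the
   coordinates I, in its dual form: the least squared norm of the vector of mismatch
   probabilities P(y j \<noteq> x j) over all laws of y supported in A. *)

definition mismatch_norm2 :: "'i set \<Rightarrow> ('i \<Rightarrow> 'a) pmf \<Rightarrow> ('i \<Rightarrow> 'a) \<Rightarrow> real" where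
  "mismatch_norm2 I \<nu> x = (\<Sum>j\<in>I. (measure_pmf.prob \<nu> {y. y j \<noteq> x j})^2)"

definition convex_dist2 :: "'i set \<Rightarrow> ('i \<Rightarrow> 'a) set \<Rightarrow> ('i \<Rightarrow> 'a) \<Rightarrow> real" where
  "convex_dist2 I A x = Inf ((\<lambda>\<nu>. mismatch_norm2 I \<nu> x) ` {\<nu>. set_pmf \<nu> \<subseteq> A})"

lemma mismatch_norm2_nonneg: "0 \<le> mismatch_norm2 I \<nu> x"
  unfolding mismatch_norm2_def by (intro sum_nonneg) auto

lemma mismatch_norm2_le_card: "mismatch_norm2 I \<nu> x \<le> card I"
proof -
  have "mismatch_norm2 I \<nu> x \<le> (\<Sum>j\<in>I. 1)"
    unfolding mismatch_norm2_def by (intro sum_mono) (auto simp: power_le_one)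
  then show ?thesis
    by simp
qed

lemma mismatch_norm2_insert:
  assumes "finite I" "i \<notin> I"
  shows "mismatch_norm2 (insert i I) \<nu> x
           = (measure_pmf.prob \<nu> {y. y i \<noteq> x i})^2 + mismatch_norm2 I \<nu> x"
  using assms by (simp add: mismatch_norm2_def)

lemma convex_dist2_le:
  "set_pmf \<nu> \<subseteq> A \<Longrightarrow> convex_dist2 I A x \<le> mismatch_norm2 I \<nu> x"
  unfolding convex_dist2_def
  by (rule cInf_lower) (auto intro!: bdd_belowI[of _ 0] mismatch_norm2_nonneg)

lemma convex_dist2_greatest:
  assumes "A \<noteq> {}" "\<And>\<nu>. set_pmf \<nu> \<subseteq> A \<Longrightarrow> c \<le> mismatch_norm2 I \<nu> x"
  shows "c \<le> convex_dist2 I A x"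
proof -
  obtain a where "a \<in> A"
    using assms(1) by blast
  then have "{\<nu>. set_pmf \<nu> \<subseteq> A} \<noteq> {}"
    by (auto intro!: exI[of _ "return_pmf a"])
  with assms(2) show ?thesis
    unfolding convex_dist2_def by (intro cInf_greatest) auto
qed

lemma convex_dist2_greatest_affine:
  assumes "A \<noteq> {}" "0 \<le> k" "\<And>\<nu>. set_pmf \<nu> \<subseteq> A \<Longrightarrow> c \<le> a + k * mismatch_norm2 I \<nu> x"
  shows "c \<le> a + k * convex_dist2 I A x"
proof (cases "k = 0")
  case True
  obtain y where "y \<in> A"
    using assms(1) by blast
  then show ?thesis
    using assms(3)[of "return_pmf y"] True by simp
next
  case False
  with assms(2) have "0 < k"
    by simp
  have "(c - a) / k \<le> convex_dist2 I A x"
  proof (rule convex_dist2_greatest[OF assms(1)])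
    fix \<nu> assume "set_pmf \<nu> \<subseteq> A"
    then show "(c - a) / k \<le> mismatch_norm2 I \<nu> x"
      using assms(3) \<open>0 < k\<close> by (simp add: pos_divide_le_eq algebra_simps)
  qed
  then show ?thesis
    using \<open>0 < k\<close> by (simp add: pos_divide_le_eq algebra_simps)
qed

lemma convex_dist2_nonneg: "A \<noteq> {} \<Longrightarrow> 0 \<le> convex_dist2 I A x"
  by (rule convex_dist2_greatest) (auto intro: mismatch_norm2_nonneg)

lemma convex_dist2_le_card:
  assumes "A \<noteq> {}"
  shows "convex_dist2 I A x \<le> card I"
proof -
  obtain y where "y \<in> A"
    using assms by blast
  then have "convex_dist2 I A x \<le> mismatch_norm2 I (return_pmf y) x"
    by (intro convex_dist2_le) auto
  then show ?thesis
    using mismatch_norm2_le_card[of I "return_pmf y" x] by linarith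
qed

lemma convex_dist2_empty: "A \<noteq> {} \<Longrightarrow> convex_dist2 {} A x = 0"
  using convex_dist2_nonneg[of A "{}" x] convex_dist2_le_card[of A "{}" x] by simp

lemma prob_map_fun_upd_other:
  assumes "j \<noteq> i"
  shows "measure_pmf.prob (map_pmf (\<lambda>y. y(i := g y)) \<nu>) {z. z j \<noteq> c}
           = measure_pmf.prob \<nu> {y. y j \<noteq> c}"
proof -
  have "(\<lambda>y. y(i := g y)) -` {z. z j \<noteq> c} = {y. y j \<noteq> c}"
    using assms by auto
  then show ?thesis
    by simp
qed

lemma mismatch_norm2_map_fun_upd:
  assumes "i \<notin> I"
  shows "mismatch_norm2 I (map_pmf (\<lambda>y. y(i := g y)) \<nu>) (x(i := w)) = mismatch_norm2 I \<nu> x"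
  unfolding mismatch_norm2_def
proof (rule sum.cong)
  fix j assume "j \<in> I"
  with assms have "j \<noteq> i"
    by blast
  then show "(measure_pmf.prob (map_pmf (\<lambda>y. y(i := g y)) \<nu>) {z. z j \<noteq> (x(i := w)) j})^2
      = (measure_pmf.prob \<nu> {y. y j \<noteq> x j})^2"
    using prob_map_fun_upd_other[of j i g \<nu> "x j"] by simp
qed simp

lemma lift_into_set_fun_upd:
  assumes "set_pmf \<nu> \<subseteq> {y. \<exists>w. y(i := w) \<in> A}"
  obtains g where "set_pmf (map_pmf (\<lambda>y. y(i := g y)) \<nu>) \<subseteq> A"
proof
  define g where "g y = (SOME w. y(i := w) \<in> A)" for y
  show "set_pmf (map_pmf (\<lambda>y. y(i := g y)) \<nu>) \<subseteq> A"
    using assms unfolding g_def by (auto intro: someI)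
qed

lemma convex_dist2_insert_le_proj:
  assumes "finite I" "i \<notin> I" "{y. \<exists>w. y(i := w) \<in> A} \<noteq> {}"
  shows "convex_dist2 (insert i I) A (x(i := w)) \<le> 1 + convex_dist2 I {y. \<exists>w. y(i := w) \<in> A} x"
proof -
  have "convex_dist2 (insert i I) A (x(i := w)) \<le> 1 + 1 * mismatch_norm2 I \<nu> x"
    if \<nu>: "set_pmf \<nu> \<subseteq> {y. \<exists>w. y(i := w) \<in> A}" for \<nu>
  proof -
    obtain g where "set_pmf (map_pmf (\<lambda>y. y(i := g y)) \<nu>) \<subseteq> A"
      using lift_into_set_fun_upd[OF \<nu>] .
    then have "convex_dist2 (insert i I) A (x(i := w))
        \<le> mismatch_norm2 (insert i I) (map_pmf (\<lambda>y. y(i := g y)) \<nu>) (x(i := w))"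
      by (rule convex_dist2_le)
    also have "\<dots> \<le> 1 + mismatch_norm2 I \<nu> x"
      using assms(1,2)
      by (simp add: mismatch_norm2_insert mismatch_norm2_map_fun_upd power_le_one)
    finally show ?thesis
      by simp
  qed
  then show ?thesis
    using convex_dist2_greatest_affine[OF assms(3), of 1] by simp
qed

lemma measure_pmf_prob_bernoulli_mix:
  assumes "0 \<le> l" "l \<le> 1"
  shows "measure_pmf.prob (bind_pmf (bernoulli_pmf l) (\<lambda>b. if b then N1 else N2)) S
           = l * measure_pmf.prob N1 S + (1 - l) * measure_pmf.prob N2 S"
  using assms by (simp add: measure_pmf_prob_bind)

lemma mismatch_norm2_bernoulli_mix_le:
  assumes "0 \<le> l" "l \<le> 1"
  shows "mismatch_norm2 I (bind_pmf (bernoulli_pmf l) (\<lambda>b. if b then N1 else N2)) x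
           \<le> l * mismatch_norm2 I N1 x + (1 - l) * mismatch_norm2 I N2 x"
  unfolding mismatch_norm2_def measure_pmf_prob_bernoulli_mix[OF assms] sum_distrib_left sum.distrib[symmetric]
  by (intro sum_mono square_convex_comb_le assms)

lemma convex_dist2_insert_le_mixture:
  assumes "finite I" "i \<notin> I" "0 \<le> l" "l \<le> 1"
    and \<nu>1: "set_pmf \<nu>1 \<subseteq> {y. y(i := w) \<in> A}"
    and \<nu>2: "set_pmf \<nu>2 \<subseteq> {y. \<exists>w. y(i := w) \<in> A}"
  shows "convex_dist2 (insert i I) A (x(i := w))
           \<le> (1 - l)^2 + l * mismatch_norm2 I \<nu>1 x + (1 - l) * mismatch_norm2 I \<nu>2 x"
proof -
  obtain g where g: "set_pmf (map_pmf (\<lambda>y. y(i := g y)) \<nu>2) \<subseteq> A"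
    using lift_into_set_fun_upd[OF \<nu>2] .
  define N1 where "N1 = map_pmf (\<lambda>y. y(i := w)) \<nu>1"
  define N2 where "N2 = map_pmf (\<lambda>y. y(i := g y)) \<nu>2"
  define \<nu> where "\<nu> = bind_pmf (bernoulli_pmf l) (\<lambda>b. if b then N1 else N2)"
  have "set_pmf \<nu> \<subseteq> A"
    using \<nu>1 g unfolding \<nu>_def N1_def N2_def by (auto split: if_splits) blast+
  then have "convex_dist2 (insert i I) A (x(i := w)) \<le> mismatch_norm2 (insert i I) \<nu> (x(i := w))"
    by (rule convex_dist2_le)
  also have "\<dots> = (measure_pmf.prob \<nu> {z. z i \<noteq> w})^2 + mismatch_norm2 I \<nu> (x(i := w))"
    using assms(1,2) by (simp add: mismatch_norm2_insert)
  also have "\<dots> \<le> (1 - l)^2 + (l * mismatch_norm2 I N1 (x(i := w)) + (1 - l) * mismatch_norm2 I N2 (x(i := w)))"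
  proof (rule add_mono)
    have "measure_pmf.prob N1 {z. z i \<noteq> w} = 0"
      unfolding N1_def by simp
    then have "measure_pmf.prob \<nu> {z. z i \<noteq> w} \<le> 1 - l"
      unfolding \<nu>_def measure_pmf_prob_bernoulli_mix[OF assms(3,4)] using assms(3,4)
      by (simp add: mult_left_le)
    then show "(measure_pmf.prob \<nu> {z. z i \<noteq> w})^2 \<le> (1 - l)^2"
      by (intro power_mono) auto
    show "mismatch_norm2 I \<nu> (x(i := w))
        \<le> l * mismatch_norm2 I N1 (x(i := w)) + (1 - l) * mismatch_norm2 I N2 (x(i := w))"
      unfolding \<nu>_def by (rule mismatch_norm2_bernoulli_mix_le[OF assms(3,4)])
  qed
  also have "\<dots> = (1 - l)^2 + l * mismatch_norm2 I \<nu>1 x + (1 - l) * mismatch_norm2 I \<nu>2 x"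
    unfolding N1_def N2_def using mismatch_norm2_map_fun_upd[OF assms(2), of "\<lambda>_. w"]
    by (simp add: mismatch_norm2_map_fun_upd[OF assms(2)])
  finally show ?thesis .
qed

lemma convex_dist2_insert_le_interpolate:
  assumes "finite I" "i \<notin> I" "0 \<le> l" "l \<le> 1"
    and "{y. y(i := w) \<in> A} \<noteq> {}"
  shows "convex_dist2 (insert i I) A (x(i := w))
           \<le> (1 - l)^2 + l * convex_dist2 I {y. y(i := w) \<in> A} x
               + (1 - l) * convex_dist2 I {y. \<exists>w. y(i := w) \<in> A} x"
proof -
  let ?S = "{y. y(i := w) \<in> A}" and ?B = "{y. \<exists>w. y(i := w) \<in> A}"
  have "?B \<noteq> {}"
    using assms(5) by blast
  have "convex_dist2 (insert i I) A (x(i := w))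
      \<le> ((1 - l)^2 + (1 - l) * mismatch_norm2 I \<nu>2 x) + l * convex_dist2 I ?S x"
    if "set_pmf \<nu>2 \<subseteq> ?B" for \<nu>2
    using convex_dist2_insert_le_mixture[OF assms(1-4) _ that]
    by (intro convex_dist2_greatest_affine assms(5) assms(3)) (simp add: algebra_simps)
  then have "convex_dist2 (insert i I) A (x(i := w))
      \<le> ((1 - l)^2 + l * convex_dist2 I ?S x) + (1 - l) * convex_dist2 I ?B x"
    using assms(4) by (intro convex_dist2_greatest_affine \<open>?B \<noteq> {}\<close>) (simp_all add: algebra_simps)
  then show ?thesis
    by simp
qed

lemma convex_dist2_ge_weighted_mismatch:
  fixes c :: "'i \<Rightarrow> real"
  assumes "A \<noteq> {}" "0 \<le> t" "0 < K" "(\<Sum>i\<in>I. (c i)^2) \<le> K"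
    and weighted: "\<And>y. y \<in> A \<Longrightarrow> t \<le> (\<Sum>i\<in>I. if y i \<noteq> x i then c i else 0)"
  shows "t^2 / K \<le> convex_dist2 I A x"
proof (rule convex_dist2_greatest[OF assms(1)])
  fix \<nu> assume \<nu>: "set_pmf \<nu> \<subseteq> A"
  define q where "q i = measure_pmf.prob \<nu> {y. y i \<noteq> x i}" for i
  have int: "integrable \<nu> (\<lambda>y. if y i \<noteq> x i then c i else 0)" for i
    by (rule integrable_measure_pmf_bounded[where C = "\<bar>c i\<bar>"]) simp
  have "(\<integral>y. (if y i \<noteq> x i then c i else 0) \<partial>\<nu>) = c i * q i" for i
  proof -
    have "(\<lambda>y. if y i \<noteq> x i then c i else 0) = (\<lambda>y. c i * indicator {y. y i \<noteq> x i} y)"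
      by (auto simp: indicator_def)
    then show ?thesis
      unfolding q_def by simp
  qed
  then have "(\<Sum>i\<in>I. c i * q i) = (\<integral>y. (\<Sum>i\<in>I. if y i \<noteq> x i then c i else 0) \<partial>\<nu>)"
    using int by (simp add: Bochner_Integration.integral_sum)
  also have "\<dots> \<ge> t"
    using \<nu> weighted int
    by (intro measure_pmf.integral_ge_const AE_pmfI Bochner_Integration.integrable_sum) auto
  finally have "t \<le> (\<Sum>i\<in>I. c i * q i)" .
  then have "t^2 \<le> (\<Sum>i\<in>I. c i * q i)^2"
    using assms(2) by (intro power_mono) auto
  also have "\<dots> \<le> (\<Sum>i\<in>I. (c i)^2) * (\<Sum>i\<in>I. (q i)^2)"
    by (rule Cauchy_Schwarz_ineq_sum)
  also have "\<dots> \<le> K * mismatch_norm2 I \<nu> x"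
    unfolding mismatch_norm2_def q_def using assms(4) by (intro mult_right_mono) (auto intro: sum_nonneg)
  finally show "t^2 / K \<le> mismatch_norm2 I \<nu> x"
    using assms(3) by (simp add: divide_le_eq mult.commute)
qed

section \<open>Talagrand's inequality\<close>

lemma integral_exp_convex_dist2_fibre_le_proj:
  fixes P :: "('i \<Rightarrow> 'a) pmf"
  assumes "finite I" "i \<notin> I"
    and IH: "\<And>S. 0 < measure_pmf.prob P S
               \<Longrightarrow> (\<integral>x. exp (convex_dist2 I S x / 4) \<partial>P) \<le> 1 / measure_pmf.prob P S"
    and pos: "0 < measure_pmf.prob P {y. \<exists>w. y(i := w) \<in> A}"
  shows "(\<integral>x. exp (convex_dist2 (insert i I) A (x(i := w)) / 4) \<partial>P)
           \<le> exp (1/4) / measure_pmf.prob P {y. \<exists>w. y(i := w) \<in> A}"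
proof -
  let ?B = "{y. \<exists>w. y(i := w) \<in> A}"
  have "?B \<noteq> {}"
    using pos by (intro notI) simp
  then have "A \<noteq> {}"
    by blast
  have "(\<integral>x. exp (convex_dist2 (insert i I) A (x(i := w)) / 4) \<partial>P)
      \<le> (\<integral>x. exp (1/4) * exp (convex_dist2 I ?B x / 4) \<partial>P)"
  proof (intro integral_mono integrable_mult_right)
    show "integrable P (\<lambda>x. exp (convex_dist2 (insert i I) A (x(i := w)) / 4))"
      using convex_dist2_le_card[OF \<open>A \<noteq> {}\<close>]
      by (intro integrable_exp_measure_pmf[where C = "card (insert i I) / 4"]) simp
    show "integrable P (\<lambda>x. exp (convex_dist2 I ?B x / 4))"
      using convex_dist2_le_card[OF \<open>?B \<noteq> {}\<close>]
      by (intro integrable_exp_measure_pmf[where C = "card I / 4"]) simp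
    show "exp (convex_dist2 (insert i I) A (x(i := w)) / 4) \<le> exp (1/4) * exp (convex_dist2 I ?B x / 4)" for x
      using convex_dist2_insert_le_proj[OF assms(1,2) \<open>?B \<noteq> {}\<close>, of x w]
      by (simp add: exp_add[symmetric] add_divide_distrib)
  qed
  also have "\<dots> = exp (1/4) * (\<integral>x. exp (convex_dist2 I ?B x / 4) \<partial>P)"
    by simp
  also have "\<dots> \<le> exp (1/4) * (1 / measure_pmf.prob P ?B)"
    using IH[OF pos] by (intro mult_left_mono) auto
  finally show ?thesis
    by simp
qed

lemma integral_exp_convex_dist2_fibre_le_interpolate:
  fixes P :: "('i \<Rightarrow> 'a) pmf"
  assumes "finite I" "i \<notin> I" "0 \<le> l" "l \<le> 1"
    and IH: "\<And>S. 0 < measure_pmf.prob P S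
               \<Longrightarrow> (\<integral>x. exp (convex_dist2 I S x / 4) \<partial>P) \<le> 1 / measure_pmf.prob P S"
    and pos: "0 < measure_pmf.prob P {y. y(i := w) \<in> A}"
  shows "(\<integral>x. exp (convex_dist2 (insert i I) A (x(i := w)) / 4) \<partial>P)
           \<le> exp ((1 - l)^2 / 4) * (1 / measure_pmf.prob P {y. y(i := w) \<in> A}) powr l
               * (1 / measure_pmf.prob P {y. \<exists>w. y(i := w) \<in> A}) powr (1 - l)"
proof -
  let ?S = "{y. y(i := w) \<in> A}" and ?B = "{y. \<exists>w. y(i := w) \<in> A}"
  have "?S \<noteq> {}"
    using pos by (intro notI) simp
  then have "?B \<noteq> {}" "A \<noteq> {}"
    by blast+
  have "measure_pmf.prob P ?S \<le> measure_pmf.prob P ?B"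
    by (intro measure_pmf.finite_measure_mono) auto
  with pos have pos_B: "0 < measure_pmf.prob P ?B"
    by linarith
  define u where "u x = convex_dist2 I ?S x / 4" for x
  define v where "v x = convex_dist2 I ?B x / 4" for x
  have u_le: "u x \<le> card I / 4" and v_le: "v x \<le> card I / 4" for x
    unfolding u_def v_def using convex_dist2_le_card[OF \<open>?S \<noteq> {}\<close>] convex_dist2_le_card[OF \<open>?B \<noteq> {}\<close>]
    by simp_all
  have "(\<integral>x. exp (convex_dist2 (insert i I) A (x(i := w)) / 4) \<partial>P)
      \<le> (\<integral>x. exp ((1 - l)^2 / 4) * exp (l * u x + (1 - l) * v x) \<partial>P)"
  proof (intro integral_mono integrable_mult_right)
    show "integrable P (\<lambda>x. exp (convex_dist2 (insert i I) A (x(i := w)) / 4))"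
      using convex_dist2_le_card[OF \<open>A \<noteq> {}\<close>]
      by (intro integrable_exp_measure_pmf[where C = "card (insert i I) / 4"]) simp
    show "integrable P (\<lambda>x. exp (l * u x + (1 - l) * v x))"
      using u_le v_le assms(3,4)
      by (intro integrable_exp_measure_pmf[where C = "card I / 4"] convex_bound_le) auto
    fix x
    have "convex_dist2 (insert i I) A (x(i := w)) / 4 \<le> (1 - l)^2 / 4 + (l * u x + (1 - l) * v x)"
      using convex_dist2_insert_le_interpolate[OF assms(1-4) \<open>?S \<noteq> {}\<close>, of x]
      unfolding u_def v_def by (simp add: field_simps)
    then show "exp (convex_dist2 (insert i I) A (x(i := w)) / 4)
        \<le> exp ((1 - l)^2 / 4) * exp (l * u x + (1 - l) * v x)"
      by (simp add: exp_add[symmetric])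
  qed
  also have "\<dots> = exp ((1 - l)^2 / 4) * (\<integral>x. exp (l * u x + (1 - l) * v x) \<partial>P)"
    by simp
  also have "\<dots> \<le> exp ((1 - l)^2 / 4) * ((\<integral>x. exp (u x) \<partial>P) powr l * (\<integral>x. exp (v x) \<partial>P) powr (1 - l))"
    using u_le v_le
    by (intro mult_left_mono integral_exp_convex_comb_le[OF assms(3,4), where C = "card I / 4"]) auto
  also have "\<dots> \<le> exp ((1 - l)^2 / 4)
      * ((1 / measure_pmf.prob P ?S) powr l * (1 / measure_pmf.prob P ?B) powr (1 - l))"
    using IH[OF pos] IH[OF pos_B] assms(3,4) unfolding u_def v_def
    by (intro mult_left_mono mult_mono powr_mono2) (auto intro: integral_nonneg_AE)
  finally show ?thesis
    by (simp add: mult.assoc)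
qed

lemma integral_exp_convex_dist2_fibre_le:
  fixes P :: "('i \<Rightarrow> 'a) pmf"
  assumes "finite I" "i \<notin> I"
    and IH: "\<And>S. 0 < measure_pmf.prob P S
               \<Longrightarrow> (\<integral>x. exp (convex_dist2 I S x / 4) \<partial>P) \<le> 1 / measure_pmf.prob P S"
    and pos: "0 < measure_pmf.prob P {y. \<exists>w. y(i := w) \<in> A}"
  shows "(\<integral>x. exp (convex_dist2 (insert i I) A (x(i := w)) / 4) \<partial>P)
           \<le> (2 - measure_pmf.prob P {y. y(i := w) \<in> A} / measure_pmf.prob P {y. \<exists>w. y(i := w) \<in> A})
               / measure_pmf.prob P {y. \<exists>w. y(i := w) \<in> A}"
proof -
  define pS where "pS = measure_pmf.prob P {y. y(i := w) \<in> A}"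
  define pB where "pB = measure_pmf.prob P {y. \<exists>w. y(i := w) \<in> A}"
  have "pS \<le> pB"
    unfolding pS_def pB_def by (intro measure_pmf.finite_measure_mono) auto
  show ?thesis
  proof (cases "pS = 0")
    case True
    have "(\<integral>x. exp (convex_dist2 (insert i I) A (x(i := w)) / 4) \<partial>P) \<le> exp (1/4) / pB"
      unfolding pB_def using assms by (rule integral_exp_convex_dist2_fibre_le_proj)
    also have "\<dots> \<le> (2 - pS / pB) / pB"
      using True exp_quarter_le pos unfolding pB_def by (simp add: divide_right_mono)
    finally show ?thesis
      unfolding pS_def pB_def .
  next
    case False
    then have "0 < pS"
      unfolding pS_def using measure_nonneg[of P] by (metis less_eq_real_def)
    then have "0 < pS / pB" "pS / pB \<le> 1"
      using \<open>pS \<le> pB\<close> by auto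
    then obtain l where l: "0 \<le> l" "l \<le> 1"
      and weight: "exp ((1 - l)^2 / 4) * (pS / pB) powr (-l) \<le> 2 - pS / pB"
      using exists_talagrand_weight by blast
    have "(\<integral>x. exp (convex_dist2 (insert i I) A (x(i := w)) / 4) \<partial>P)
        \<le> exp ((1 - l)^2 / 4) * (1 / pS) powr l * (1 / pB) powr (1 - l)"
      unfolding pS_def pB_def using assms(1,2) l IH \<open>0 < pS\<close>[unfolded pS_def]
      by (rule integral_exp_convex_dist2_fibre_le_interpolate)
    also have "\<dots> = exp ((1 - l)^2 / 4) * (pS / pB) powr (-l) / pB"
      using \<open>0 < pS\<close> pos unfolding pB_def
      by (simp add: powr_divide powr_minus powr_diff field_simps)
    also have "\<dots> \<le> (2 - pS / pB) / pB"
      using weight pos unfolding pB_def by (simp add: divide_right_mono)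
    finally show ?thesis
      unfolding pS_def pB_def .
  qed
qed

theorem talagrand_convex_distance:
  fixes M :: "'i \<Rightarrow> 'a pmf"
  assumes "finite I" "0 < measure_pmf.prob (Pi_pmf I d M) A"
  shows "(\<integral>x. exp (convex_dist2 I A x / 4) \<partial>Pi_pmf I d M) \<le> 1 / measure_pmf.prob (Pi_pmf I d M) A"
  using assms
proof (induction I arbitrary: A rule: finite_induct)
  case empty
  then have "A \<noteq> {}"
    by auto
  with empty show ?case
    by (simp add: convex_dist2_empty indicator_def split: if_splits)
next
  case (insert i I)
  let ?P = "Pi_pmf I d M" and ?B = "{y. \<exists>w. y(i := w) \<in> A}"
  define pA where "pA = measure_pmf.prob (Pi_pmf (insert i I) d M) A"
  define pB where "pB = measure_pmf.prob ?P ?B"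
  define pS where "pS w = measure_pmf.prob ?P {y. y(i := w) \<in> A}" for w
  have pA_eq: "pA = (\<integral>w. pS w \<partial>M i)"
    unfolding pA_def pS_def using insert.hyps by (rule prob_Pi_pmf_insert)
  have int_pS: "integrable (M i) pS"
    unfolding pS_def by (rule integrable_measure_pmf_bounded[where C = 1]) simp
  have pS_le: "pS w \<le> pB" for w
    unfolding pS_def pB_def by (intro measure_pmf.finite_measure_mono) auto
  have "0 < pA"
    using insert.prems unfolding pA_def .
  have "0 < pB"
  proof (rule ccontr)
    assume "\<not> 0 < pB"
    then have "pS = (\<lambda>_. 0)"
      using pS_le measure_nonneg[of ?P] unfolding pS_def by (intro ext) (meson antisym not_less order.trans)
    then show False
      using \<open>0 < pA\<close> pA_eq by simp
  qed
  then have "A \<noteq> {}"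
    unfolding pB_def by (intro notI) simp
  have "(\<integral>x. exp (convex_dist2 (insert i I) A x / 4) \<partial>Pi_pmf (insert i I) d M)
      = (\<integral>w. (\<integral>x. exp (convex_dist2 (insert i I) A (x(i := w)) / 4) \<partial>?P) \<partial>M i)"
    using insert.hyps convex_dist2_le_card[OF \<open>A \<noteq> {}\<close>, of "insert i I"]
    by (intro integral_Pi_pmf_insert[where C = "exp (card (insert i I) / 4)"]) auto
  also have "\<dots> \<le> (\<integral>w. (2 - pS w / pB) / pB \<partial>M i)"
  proof (rule integral_mono')
    show "integrable (M i) (\<lambda>w. (2 - pS w / pB) / pB)"
      using int_pS by (intro integrable_divide Bochner_Integration.integrable_diff) auto
    show "0 \<le> (2 - pS w / pB) / pB" for w
      using pS_le[of w] \<open>0 < pB\<close> by (simp add: field_simps)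
    show "(\<integral>x. exp (convex_dist2 (insert i I) A (x(i := w)) / 4) \<partial>?P) \<le> (2 - pS w / pB) / pB" for w
      using integral_exp_convex_dist2_fibre_le[OF insert.hyps insert.IH] \<open>0 < pB\<close>
      unfolding pS_def pB_def by blast
  qed
  also have "\<dots> = (2 - pA / pB) / pB"
    unfolding pA_eq using int_pS by simp
  also have "\<dots> \<le> 1 / pA"
    using \<open>0 < pA\<close> \<open>0 < pB\<close> by (rule two_minus_div_div_le_inverse)
  finally show ?case
    unfolding pA_def .
qed

corollary talagrand_convex_distance_tail:
  fixes M :: "'i \<Rightarrow> 'a pmf"
  assumes "finite I" "0 < measure_pmf.prob (Pi_pmf I d M) A"
  shows "measure_pmf.prob (Pi_pmf I d M) {x. s \<le> convex_dist2 I A x}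
           \<le> exp (-s/4) / measure_pmf.prob (Pi_pmf I d M) A"
proof -
  let ?P = "Pi_pmf I d M"
  have "A \<noteq> {}"
    using assms(2) by (intro notI) simp
  have "measure_pmf.prob ?P {x. s \<le> convex_dist2 I A x} = (\<integral>x. indicator {x. s \<le> convex_dist2 I A x} x \<partial>?P)"
    by simp
  also have "\<dots> \<le> (\<integral>x. exp (-s/4) * exp (convex_dist2 I A x / 4) \<partial>?P)"
  proof (rule integral_mono)
    show "integrable ?P (\<lambda>x. indicator {x. s \<le> convex_dist2 I A x} x :: real)"
      by (rule integrable_measure_pmf_bounded[where C = 1]) (simp add: indicator_def)
    show "integrable ?P (\<lambda>x. exp (-s/4) * exp (convex_dist2 I A x / 4))"
      using convex_dist2_le_card[OF \<open>A \<noteq> {}\<close>]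
      by (intro integrable_mult_right integrable_exp_measure_pmf[where C = "card I / 4"]) simp
    show "indicator {x. s \<le> convex_dist2 I A x} x \<le> exp (-s/4) * exp (convex_dist2 I A x / 4)" for x
      by (simp add: indicator_def exp_add[symmetric])
  qed
  also have "\<dots> = exp (-s/4) * (\<integral>x. exp (convex_dist2 I A x / 4) \<partial>?P)"
    by simp
  also have "\<dots> \<le> exp (-s/4) * (1 / measure_pmf.prob ?P A)"
    using assms by (intro mult_left_mono talagrand_convex_distance) auto
  finally show ?thesis
    by simp
qed

section \<open>Vertex exposure of G(n,p)\<close>

lemma if_blocks_insert_eq:
  assumes "k \<notin> K" "\<And>k' x. k' \<in> insert k K \<Longrightarrow> x \<in> S k' \<Longrightarrow> block x = k'"
  shows "(\<lambda>x. if x \<in> S k then y x else if x \<in> (\<Union>k\<in>K. S k) then F (block x) x else d)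
           = (\<lambda>x. if x \<in> S k \<union> (\<Union>k\<in>K. S k) then (F(k := y)) (block x) x else d)"
proof
  fix x
  show "(if x \<in> S k then y x else if x \<in> (\<Union>k\<in>K. S k) then F (block x) x else d)
      = (if x \<in> S k \<union> (\<Union>k\<in>K. S k) then (F(k := y)) (block x) x else d)"
  proof (cases "x \<in> S k")
    case True
    then show ?thesis
      using assms(2) by simp
  next
    case False
    have "block x \<noteq> k" if "x \<in> (\<Union>k\<in>K. S k)"
    proof -
      from that obtain k' where "k' \<in> K" "x \<in> S k'"
        by blast
      then show ?thesis
        using assms by auto
    qed
    with False show ?thesis
      by simp
  qed
qed

lemma Pi_pmf_UN_blocks:
  fixes S :: "'k \<Rightarrow> 'x set" and block :: "'x \<Rightarrow> 'k"
  assumes "finite K" "\<And>k. k \<in> K \<Longrightarrow> finite (S k)"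
    and "\<And>k x. k \<in> K \<Longrightarrow> x \<in> S k \<Longrightarrow> block x = k"
  shows "Pi_pmf (\<Union>k\<in>K. S k) d p
           = map_pmf (\<lambda>F x. if x \<in> (\<Union>k\<in>K. S k) then F (block x) x else d)
               (Pi_pmf K d' (\<lambda>k. Pi_pmf (S k) d p))"
  using assms
proof (induction K rule: finite_induct)
  case empty
  show ?case
    by simp
next
  case (insert k K)
  let ?U = "\<Union>k\<in>K. S k" and ?Q = "\<lambda>k. Pi_pmf (S k) d p"
  have "S k \<inter> ?U = {}"
  proof -
    have "x \<notin> S k'" if "x \<in> S k" "k' \<in> K" for x k'
      using that insert.prems(2)[of k x] insert.prems(2)[of k' x] insert.hyps(2) by auto
    then show ?thesis
      by blast
  qed
  have "Pi_pmf (S k \<union> ?U) d p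
      = map_pmf (\<lambda>(f, g) x. if x \<in> S k then f x else g x) (pair_pmf (?Q k) (Pi_pmf ?U d p))"
    using insert \<open>S k \<inter> ?U = {}\<close> by (intro Pi_pmf_union) auto
  also have "Pi_pmf ?U d p = map_pmf (\<lambda>F x. if x \<in> ?U then F (block x) x else d) (Pi_pmf K d' ?Q)"
    using insert by simp
  also have "map_pmf (\<lambda>(f, g) x. if x \<in> S k then f x else g x)
        (pair_pmf (?Q k) (map_pmf (\<lambda>F x. if x \<in> ?U then F (block x) x else d) (Pi_pmf K d' ?Q)))
      = map_pmf (\<lambda>(y, F) x. if x \<in> S k \<union> ?U then (F(k := y)) (block x) x else d)
          (pair_pmf (?Q k) (Pi_pmf K d' ?Q))"
    unfolding pair_map_pmf2 map_pmf_comp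
    using if_blocks_insert_eq[where S = S and block = block and d = d, OF insert.hyps(2) insert.prems(2)]
    by (intro map_pmf_cong refl) (auto simp only: apsnd_conv prod.case split: prod.splits)
  also have "\<dots> = map_pmf (\<lambda>F x. if x \<in> S k \<union> ?U then F (block x) x else d) (Pi_pmf (insert k K) d' ?Q)"
    using insert by (simp add: Pi_pmf_insert map_pmf_comp case_prod_unfold)
  finally show ?case
    by simp
qed

definition lower_pairs :: "nat \<Rightarrow> nat set set" where
  "lower_pairs k = {{j, k} | j. 1 \<le> j \<and> j < k}"

(* F k is the exposure of vertex k, an edge indicator on lower_pairs k; the graph reads
   each edge e off the exposure of its larger endpoint Max e. *)

definition graph_of_exposure :: "nat \<Rightarrow> (nat \<Rightarrow> nat set \<Rightarrow> bool) \<Rightarrow> nat set \<Rightarrow> bool" where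
  "graph_of_exposure n F e = (e \<in> pairs n \<and> F (Max e) e)"

lemma pairs_eq_UN_lower_pairs: "pairs n = (\<Union>k\<in>{1..n}. lower_pairs k)"
  unfolding pairs_def lower_pairs_def by fastforce

lemma gnp_vertex_exposure:
  "gnp n p = map_pmf (graph_of_exposure n)
     (Pi_pmf {1..n} (\<lambda>_. False) (\<lambda>k. Pi_pmf (lower_pairs k) False (\<lambda>_. bernoulli_pmf p)))"
proof -
  have "gnp n p = Pi_pmf (\<Union>k\<in>{1..n}. lower_pairs k) False (\<lambda>_. bernoulli_pmf p)"
    unfolding gnp_def pairs_eq_UN_lower_pairs ..
  also have "\<dots> = map_pmf (\<lambda>F e. if e \<in> (\<Union>k\<in>{1..n}. lower_pairs k) then F (Max e) e else False)
      (Pi_pmf {1..n} (\<lambda>_. False) (\<lambda>k. Pi_pmf (lower_pairs k) False (\<lambda>_. bernoulli_pmf p)))"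
  proof (rule Pi_pmf_UN_blocks)
    have "lower_pairs k = (\<lambda>j. {j, k}) ` {1..<k}" for k
      unfolding lower_pairs_def by auto
    then show "finite (lower_pairs k)" for k
      by simp
    show "Max e = k" if "e \<in> lower_pairs k" for e k
      using that unfolding lower_pairs_def by (auto simp: max_def)
  qed simp
  also have "(\<lambda>F e. if e \<in> (\<Union>k\<in>{1..n}. lower_pairs k) then F (Max e) e else False) = graph_of_exposure n"
    unfolding graph_of_exposure_def pairs_eq_UN_lower_pairs by (intro ext) simp
  finally show ?thesis .
qed

lemma graph_of_exposure_agree:
  assumes "graph_of_exposure n y {i, j}" "y i = F i" "y j = F j"
  shows "graph_of_exposure n F {i, j}"
proof -
  have "Max {i, j} = i \<or> Max {i, j} = j"
    by (auto simp: max_def)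
  then show ?thesis
    using assms unfolding graph_of_exposure_def by auto
qed

section \<open>Orthogonal representations and the Lovasz number\<close>

definition orth_rep :: "nat \<Rightarrow> (nat set \<Rightarrow> bool) \<Rightarrow> nat \<Rightarrow> (nat \<Rightarrow> nat \<Rightarrow> real) \<Rightarrow> bool" where
  "orth_rep n E d v \<longleftrightarrow>
     1 \<le> d \<and> (\<forall>i j. 1 \<le> i \<and> i \<le> n \<and> 1 \<le> j \<and> j \<le> n \<and> i \<noteq> j \<and> E {i, j}
                      \<longrightarrow> inner_d d (v i) (v j) = 0)"

lemma lovasz_theta_orth_rep:
  "lovasz_theta n E = Sup {(\<Sum>i=1..n. cval d (v i)) | d v. orth_rep n E d v}"
  unfolding lovasz_theta_def orth_rep_def ..

lemma cval_nonneg: "0 \<le> cval d a"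
  unfolding cval_def inner_d_def by (auto intro!: divide_nonneg_nonneg sum_nonneg)

lemma cval_le_one:
  assumes "1 \<le> d"
  shows "cval d a \<le> 1"
proof -
  have "(\<Sum>k\<in>{0}. (a k)^2) \<le> (\<Sum>k<d. (a k)^2)"
    using assms by (intro sum_mono2) auto
  then have "(a 0)^2 \<le> inner_d d a a"
    unfolding inner_d_def by (simp add: power2_eq_square)
  moreover have "0 \<le> inner_d d a a"
    unfolding inner_d_def by (auto intro: sum_nonneg)
  ultimately show ?thesis
    unfolding cval_def by auto
qed

lemma cval_zero: "cval d (\<lambda>_. 0) = 0"
  unfolding cval_def inner_d_def by simp

lemma bdd_above_orth_rep_values: "bdd_above {(\<Sum>i=1..n. cval d (v i)) | d v. orth_rep n E d v}"
proof (rule bdd_aboveI)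
  fix s assume "s \<in> {(\<Sum>i=1..n. cval d (v i)) | d v. orth_rep n E d v}"
  then obtain d v where "s = (\<Sum>i=1..n. cval d (v i))" "orth_rep n E d v"
    by blast
  then show "s \<le> real n"
    using sum_mono[of "{1..n}" "\<lambda>i. cval d (v i)" "\<lambda>_. 1"] cval_le_one[of d]
    by (simp add: orth_rep_def)
qed

lemma lovasz_theta_ge: "orth_rep n E d v \<Longrightarrow> (\<Sum>i=1..n. cval d (v i)) \<le> lovasz_theta n E"
  unfolding lovasz_theta_orth_rep by (rule cSup_upper[OF _ bdd_above_orth_rep_values]) blast

lemma lovasz_theta_approx:
  assumes "0 < e"
  obtains d v where "orth_rep n E d v" "lovasz_theta n E - e < (\<Sum>i=1..n. cval d (v i))"
proof -
  have "orth_rep n E 1 (\<lambda>_ _. 0)"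
    by (simp add: orth_rep_def inner_d_def)
  then have "{(\<Sum>i=1..n. cval d (v i)) | d v. orth_rep n E d v} \<noteq> {}"
    by blast
  from less_cSupD[OF this, of "lovasz_theta n E - e"] assms that show ?thesis
    unfolding lovasz_theta_orth_rep by auto
qed

lemma sum_cval_le_lovasz_theta_add:
  assumes rep: "orth_rep n E d v"
    and edges: "\<And>i j. E' {i, j} \<Longrightarrow> i \<notin> Z \<Longrightarrow> j \<notin> Z \<Longrightarrow> E {i, j}"
  shows "(\<Sum>i=1..n. cval d (v i)) \<le> lovasz_theta n E' + (\<Sum>i=1..n. if i \<in> Z then cval d (v i) else 0)"
proof -
  define v' where "v' i = (if i \<in> Z then (\<lambda>_. 0) else v i)" for i
  have "orth_rep n E' d v'"
    using rep edges unfolding orth_rep_def v'_def by (auto simp: inner_d_def)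
  then have "(\<Sum>i=1..n. cval d (v' i)) \<le> lovasz_theta n E'"
    by (rule lovasz_theta_ge)
  moreover have "(\<Sum>i=1..n. cval d (v i)) = (\<Sum>i=1..n. cval d (v' i)) + (\<Sum>i=1..n. if i \<in> Z then cval d (v i) else 0)"
    unfolding v'_def sum.distrib[symmetric] by (intro sum.cong) (auto simp: cval_zero)
  ultimately show ?thesis
    by linarith
qed

lemma convex_dist2_ge_lovasz_theta_gap:
  fixes n :: nat and m \<theta>0 \<xi> :: real
  defines "A \<equiv> {y. lovasz_theta n (graph_of_exposure n y) \<le> m}"
  assumes "A \<noteq> {}" "0 < \<theta>0" "0 < \<xi>"
    and "m + \<xi> \<le> lovasz_theta n (graph_of_exposure n F)" "lovasz_theta n (graph_of_exposure n F) \<le> \<theta>0"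
  shows "4 * \<xi>^2 / (5 * \<theta>0) \<le> convex_dist2 {1..n} A F"
proof -
  let ?G = "graph_of_exposure n"
  (* theta is only a supremum, so xi/10 is lost to approximation; (9/10)^2 > 4/5 *)
  obtain d v where rep: "orth_rep n (?G F) d v"
    and near: "lovasz_theta n (?G F) - \<xi>/10 < (\<Sum>i=1..n. cval d (v i))"
    using lovasz_theta_approx[of "\<xi>/10" n "?G F"] \<open>0 < \<xi>\<close> by auto
  define c where "c i = cval d (v i)" for i
  have "(\<Sum>i\<in>{1..n}. (c i)^2) \<le> (\<Sum>i\<in>{1..n}. c i)"
    using rep cval_nonneg cval_le_one unfolding c_def orth_rep_def
    by (intro sum_mono) (simp add: power2_eq_square mult_left_le)
  also have "\<dots> \<le> \<theta>0"
    using lovasz_theta_ge[OF rep] assms(6) unfolding c_def by simp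
  finally have sum_sq: "(\<Sum>i\<in>{1..n}. (c i)^2) \<le> \<theta>0" .
  have "9/10 * \<xi> \<le> (\<Sum>i\<in>{1..n}. if y i \<noteq> F i then c i else 0)" if "y \<in> A" for y
  proof -
    have "(\<Sum>i=1..n. c i) \<le> lovasz_theta n (?G y) + (\<Sum>i=1..n. if i \<in> {i. y i \<noteq> F i} then c i else 0)"
      unfolding c_def using rep by (rule sum_cval_le_lovasz_theta_add) (auto intro: graph_of_exposure_agree)
    then show ?thesis
      using that near assms(5) unfolding A_def c_def by simp
  qed
  then have "(9/10 * \<xi>)^2 / \<theta>0 \<le> convex_dist2 {1..n} A F"
    using assms(2-4) sum_sq by (intro convex_dist2_ge_weighted_mismatch) auto
  moreover have "4 * \<xi>^2 / (5 * \<theta>0) \<le> (9/10 * \<xi>)^2 / \<theta>0"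
    using \<open>0 < \<theta>0\<close> by (simp add: field_simps power2_eq_square)
  ultimately show ?thesis
    by linarith
qed

theorem lemma1:
  fixes n :: nat and p m \<theta>0 \<xi> :: real
  assumes "0 < p" "p < 1"
    and "measure_pmf.prob (gnp n p) {E. lovasz_theta n E \<le> m} \<ge> 1/2"
    and "measure_pmf.prob (gnp n p) {E. lovasz_theta n E \<ge> m} \<ge> 1/2"
    and "\<theta>0 > 0" and "\<xi> \<ge> 10"
  shows "measure_pmf.prob (gnp n p) {E. m + \<xi> \<le> lovasz_theta n E \<and> lovasz_theta n E \<le> \<theta>0}
           \<le> 2 * exp (- (\<xi>^2) / (5 * \<theta>0))"
proof -
  let ?X = "Pi_pmf {1..n} (\<lambda>_. False) (\<lambda>k. Pi_pmf (lower_pairs k) False (\<lambda>_. bernoulli_pmf p))"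
  let ?G = "graph_of_exposure n"
  define A where "A = {y. lovasz_theta n (?G y) \<le> m}"
  define s where "s = 4 * \<xi>^2 / (5 * \<theta>0)"
  have prob_A: "1/2 \<le> measure_pmf.prob ?X A"
    using assms(3) by (simp add: gnp_vertex_exposure A_def vimage_def)
  then have "A \<noteq> {}"
    by (intro notI) simp
  have "measure_pmf.prob (gnp n p) {E. m + \<xi> \<le> lovasz_theta n E \<and> lovasz_theta n E \<le> \<theta>0}
      = measure_pmf.prob ?X {y. m + \<xi> \<le> lovasz_theta n (?G y) \<and> lovasz_theta n (?G y) \<le> \<theta>0}"
    by (simp add: gnp_vertex_exposure vimage_def)
  also have "\<dots> \<le> measure_pmf.prob ?X {y. s \<le> convex_dist2 {1..n} A y}"
    using convex_dist2_ge_lovasz_theta_gap[where n = n and m = m, folded A_def, OF \<open>A \<noteq> {}\<close> assms(5)] assms(6)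
    unfolding s_def by (intro measure_pmf.finite_measure_mono) auto
  also have "\<dots> \<le> exp (-s/4) / measure_pmf.prob ?X A"
    using prob_A by (intro talagrand_convex_distance_tail) auto
  also have "\<dots> \<le> exp (-s/4) / (1/2)"
    using prob_A by (intro divide_left_mono) auto
  also have "\<dots> = 2 * exp (- (\<xi>^2) / (5 * \<theta>0))"
    unfolding s_def by simp
  finally show ?thesis .
qed

end
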